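(* Let $L\in\mathrm{Mat}_N(\mathbb{Z})$ be symmetric positive definite with even diagonal, $k\in\mathbb{Z}$, and $s\in\mathrm{Mat}_N(\mathbb{Z})$ with $\det s\ne0$; put $L'=L[s]=s^{\mathrm{tr}}Ls$. Let $\phi\in\mathrm{J}_{k,L}$ with theta decomposition $\phi=\sum_{l\in\mathbb{Z}^N/L\mathbb{Z}^N}\theta_{L,l}h_l$, and let $\phi|U_s(\tau,z):=\phi(\tau,sz)$, an element of $\mathrm{J}_{k,L'}$ with theta decomposition $\sum_{\nu\in\mathbb{Z}^N/L'\mathbb{Z}^N}\theta_{L',\nu}h'_\nu$. Then $\Theta_{L'}(\phi|U_s)=\Theta_L(\phi)\uparrow_H^{D'}$; explicitly, for $\nu\in\mathbb{Z}^N$: if $\nu\equiv s^{\mathrm{tr}}\mu \pmod{s^{\mathrm{tr}}L\mathbb{Z}^N}$ for some $\mu\in\mathbb{Z}^N$ then $h'_\nu=h_\mu$, and if $\nu\notin s^{\mathrm{tr}}\mathbb{Z}^N$ then $h'_\nu=0$.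
   Context: Notation $e(x)=\exp(2\pi ix)$, $q=e(\tau)$, $\zeta^r=e(r^{\mathrm{tr}}z)$, $L[z]=z^{\mathrm{tr}}Lz$, $|L|=\det L$, $L^\#=|L|L^{-1}$. $\mathrm{J}_{k,L}$ is the space of Jacobi forms of weight $k$ and index $L$: holomorphic $\phi:\mathbb{H}\times\mathbb{C}^N\to\mathbb{C}$ with $(c\tau+d)^{-k}e\big(-\tfrac{cL[z+\lambda\tau+\mu]}{2(c\tau+d)}+\tfrac{\tau L[\lambda]}{2}+\lambda^{\mathrm{tr}}Lz\big)\phi\big(\tfrac{a\tau+b}{c\tau+d},\tfrac{z+\lambda\tau+\mu}{c\tau+d}\big)=\phi(\tau,z)$ for all $\begin{pmatrix}a&b\\c&d\end{pmatrix}\in\mathrm{SL}_2(\mathbb{Z})$, $\lambda,\mu\in\mathbb{Z}^N$, and with Fourier coefficients $c(n,r)$ (of $q^n\zeta^r$) vanishing unless $2|L|n-L^\#[r]\ge0$. For $l\in\mathbb{Z}^N$, $\theta_{L,l}(\tau,z)=\sum_{r\in\mathbb{Z}^N,\ r\equiv l\ (\mathrm{mod}\ L\mathbb{Z}^N)}q^{L^{-1}[r]/2}\zeta^r$. Every $\phi\in\mathrm{J}_{k,L}$ can be written uniquely as $\phi(\tau,z)=\sum_{l\in\mathbb{Z}^N/L\mathbb{Z}^N}\theta_{L,l}(\tau,z)h_l(\tau)$ with holomorphic $h_l$ on $\mathbb{H}$ (theta decomposition), and $\Theta_L(\phi):=\sum_l h_l\,\mathfrak{e}_l$, a vector valued modular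 form with values in $\mathbb{C}[\mathbb{Z}^N/L\mathbb{Z}^N]$. Here $\mathbb{Z}^N/L\mathbb{Z}^N$ is identified with the discriminant form $D=\mathrm{disc}\,\mathcal{L}$ of the lattice $\mathcal{L}$ with Gram matrix $L$ (quadratic form $l\mapsto L^{-1}[l]/2 \bmod 1$), and similarly $D'=\mathbb{Z}^N/L'\mathbb{Z}^N$. The subgroup $H=s^{\mathrm{tr}}L\mathbb{Z}^N/L'\mathbb{Z}^N\subseteq D'$ is isotropic, $H^\perp=s^{\mathrm{tr}}\mathbb{Z}^N/L'\mathbb{Z}^N$, and $l\mapsto s^{\mathrm{tr}}l$ induces an isomorphism $D\cong H^\perp/H$. For $f=\sum_{\delta\in H^\perp/H}f_\delta\mathfrak{e}_\delta$, the operator is $f\uparrow_H^{D'}=\sum_{\nu\in H^\perp}f_{\nu+H}\,\mathfrak{e}_\nu$. *)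

theory Defs
  imports "HOL-Analysis.Analysis"
begin

text \<open>Conventions: vectors in Z^N / C^N are modelled as int^'n / complex^'n, integer
  N x N matrices as int^'n^'n (N = CARD('n), arbitrary but fixed).\<close>

definition ee :: "complex \<Rightarrow> complex" where
  "ee x = exp (2 * of_real pi * \<i> * x)"

definition upper_half :: "complex set" where
  "upper_half = {\<tau>. Im \<tau> > 0}"

definition cmv :: "int^'n^'n \<Rightarrow> complex^'n \<Rightarrow> complex^'n" where
  "cmv s z = (\<chi> i. \<Sum>j\<in>UNIV. of_int (s$i$j) * z$j)"

definition cbil :: "int^'n^'n \<Rightarrow> complex^'n \<Rightarrow> complex^'n \<Rightarrow> complex" where
  "cbil L a b = (\<Sum>i\<in>UNIV. \<Sum>j\<in>UNIV. a$i * of_int (L$i$j) * b$j)"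

definition cqf :: "int^'n^'n \<Rightarrow> complex^'n \<Rightarrow> complex" where
  "cqf L z = cbil L z z"

definition int_to_cvec :: "int^'n \<Rightarrow> complex^'n" where
  "int_to_cvec v = (\<chi> i. of_int (v$i))"

definition realmat :: "int^'n^'n \<Rightarrow> real^'n^'n" where
  "realmat L = (\<chi> i j. real_of_int (L$i$j))"

text \<open>L^{-1}[r] (a rational, here real, number).\<close>
definition inv_qf :: "int^'n^'n \<Rightarrow> int^'n \<Rightarrow> real" where
  "inv_qf L r = (let v = (\<chi> i. real_of_int (r$i)) in v \<bullet> (matrix_inv (realmat L) *v v))"

definition adj_qf :: "int^'n^'n \<Rightarrow> int^'n \<Rightarrow> real" where
  "adj_qf L r = real_of_int (det L) * inv_qf L r"

definition symmetric_pd_even :: "int^'n^'n \<Rightarrow> bool" where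
  "symmetric_pd_even L \<longleftrightarrow>
     transpose L = L \<and>
     (\<forall>x::real^'n. x \<noteq> 0 \<longrightarrow> x \<bullet> (realmat L *v x) > 0) \<and>
     (\<forall>i. even (L$i$i))"

text \<open>Holomorphy of a function on H x C^N: complex (Frechet) differentiability, i.e.
  real differentiability with a complex-linear derivative.\<close>
definition holo_HxCN :: "(complex \<Rightarrow> complex^'n \<Rightarrow> complex) \<Rightarrow> bool" where
  "holo_HxCN \<phi> \<longleftrightarrow>
     (\<forall>\<tau> z. Im \<tau> > 0 \<longrightarrow>
        (\<exists>D. ((\<lambda>p. \<phi> (fst p) (snd p)) has_derivative D) (at (\<tau>, z)) \<and>
             (\<forall>c t w. D (c * t, c *s w) = c * D (t, w))))"

definition jacobi_form :: "int \<Rightarrow> int^'n^'n \<Rightarrow> (complex \<Rightarrow> complex^'n \<Rightarrow> complex) \<Rightarrow> bool" where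
  "jacobi_form k L \<phi> \<longleftrightarrow>
     holo_HxCN \<phi> \<and>
     (\<forall>a b c d :: int. \<forall>lam mu :: int^'n. \<forall>\<tau> z. a * d - b * c = 1 \<longrightarrow> Im \<tau> > 0 \<longrightarrow>
        (let j = of_int c * \<tau> + of_int d;
             w = z + \<tau> *s int_to_cvec lam + int_to_cvec mu in
         j powi (-k) *
         ee (- (of_int c * cqf L w) / (2 * j) + \<tau> * cqf L (int_to_cvec lam) / 2
             + cbil L (int_to_cvec lam) z) *
         \<phi> ((of_int a * \<tau> + of_int b) / j) ((1 / j) *s w) = \<phi> \<tau> z)) \<and>
     (\<exists>cf :: int \<Rightarrow> int^'n \<Rightarrow> complex.
        (\<forall>n r. cf n r \<noteq> 0 \<longrightarrow> 2 * real_of_int (det L) * real_of_int n - adj_qf L r \<ge> 0) \<and>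
        (\<forall>\<tau> z. Im \<tau> > 0 \<longrightarrow>
           ((\<lambda>(n, r). cf n r * ee (of_int n * \<tau> + (\<Sum>i\<in>UNIV. of_int (r$i) * z$i)))
              has_sum \<phi> \<tau> z) UNIV))"

text \<open>The class l + L Z^N, and the discriminant group Z^N / L Z^N as the set of classes.\<close>
definition lat_coset :: "int^'n^'n \<Rightarrow> int^'n \<Rightarrow> (int^'n) set" where
  "lat_coset L l = {l + L *v x | x. True}"

definition disc :: "int^'n^'n \<Rightarrow> (int^'n) set set" where
  "disc L = range (lat_coset L)"

text \<open>theta_{L,l} with l given through its class C = l + L Z^N.\<close>
definition theta :: "int^'n^'n \<Rightarrow> (int^'n) set \<Rightarrow> complex \<Rightarrow> complex^'n \<Rightarrow> complex" where
  "theta L C \<tau> z =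
     (\<Sum>\<^sub>\<infinity>r\<in>C. ee (\<tau> * of_real (inv_qf L r) / 2 + (\<Sum>i\<in>UNIV. of_int (r$i) * z$i)))"

definition theta_decomp ::
  "int^'n^'n \<Rightarrow> (complex \<Rightarrow> complex^'n \<Rightarrow> complex) \<Rightarrow> ((int^'n) set \<Rightarrow> complex \<Rightarrow> complex) \<Rightarrow> bool" where
  "theta_decomp L \<phi> h \<longleftrightarrow>
     (\<forall>C\<in>disc L. h C holomorphic_on upper_half) \<and>
     (\<forall>\<tau> z. Im \<tau> > 0 \<longrightarrow> \<phi> \<tau> z = (\<Sum>C\<in>disc L. theta L C \<tau> z * h C \<tau>))"

definition U_op :: "int^'n^'n \<Rightarrow> (complex \<Rightarrow> complex^'n \<Rightarrow> complex) \<Rightarrow> complex \<Rightarrow> complex^'n \<Rightarrow> complex" where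
  "U_op s \<phi> \<tau> z = \<phi> \<tau> (cmv s z)"

end

theory Submission
  imports Defs
begin

text \<open>Both sides of the claim are coefficients of absolutely convergent series
  \<open>\<Sum>\<^sub>\<rho> c(\<rho>) e(\<tau> L'\<^sup>-\<^sup>1[\<rho>]/2 + \<rho>\<^sup>t\<^sup>r z)\<close> over \<open>\<rho> \<in> \<int>\<^sup>N\<close>: the theta decomposition of
  \<open>\<phi>|U\<^sub>s\<close> for \<open>L'\<close> is one directly, and that of \<open>\<phi>\<close> for \<open>L\<close> becomes one after substituting
  \<open>\<rho> = s\<^sup>t\<^sup>r r\<close>, because \<open>L'\<^sup>-\<^sup>1[s\<^sup>t\<^sup>r r] = L\<^sup>-\<^sup>1[r]\<close> and \<open>r\<^sup>t\<^sup>r (s z) = (s\<^sup>t\<^sup>r r)\<^sup>t\<^sup>r z\<close>. Such a series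
  determines its coefficients: averaging it over the points \<open>z \<in> M\<^sup>-\<^sup>1\<int>\<^sup>N\<close> picks out the
  coefficients with \<open>\<rho> \<equiv> \<nu> (mod M)\<close>, and as \<open>M\<close> grows only \<open>\<nu>\<close> itself survives.\<close>

section \<open>Integer matrices as real matrices\<close>

definition int_to_rvec :: "int^'n \<Rightarrow> real^'n" where
  "int_to_rvec x = (\<chi> i. real_of_int (x$i))"

lemma int_to_rvec_mult: "int_to_rvec (M *v x) = realmat M *v int_to_rvec x"
  by (simp add: int_to_rvec_def realmat_def matrix_vector_mult_def vec_eq_iff of_int_sum)

lemma int_to_rvec_diff: "int_to_rvec (a - b) = int_to_rvec a - int_to_rvec b"
  by (simp add: int_to_rvec_def vec_eq_iff)

lemma int_to_rvec_inj: "inj int_to_rvec"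
  by (simp add: inj_def int_to_rvec_def vec_eq_iff)

lemma realmat_mult: "realmat (A ** B) = realmat A ** realmat B"
  by (simp add: realmat_def matrix_matrix_mult_def vec_eq_iff of_int_sum)

lemma realmat_transpose: "realmat (transpose A) = transpose (realmat A)"
  by (simp add: realmat_def transpose_def vec_eq_iff)

lemma det_realmat: "det (realmat A) = real_of_int (det A)"
  unfolding det_def realmat_def by (simp add: of_int_sum of_int_prod)

lemma invertible_realmat: "det s \<noteq> 0 \<Longrightarrow> invertible (realmat s)"
  by (simp add: invertible_det_nz det_realmat)

lemma inj_matrix_vector_mult_int:
  fixes s :: "int^'n^'n"
  assumes "det s \<noteq> 0"
  shows "inj ((*v) s)"
proof (rule injI)
  fix x y assume "s *v x = s *v y"
  then have "realmat s *v int_to_rvec x = realmat s *v int_to_rvec y"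
    by (metis int_to_rvec_mult)
  then show "x = y"
    using inj_matrix_vector_mult[OF invertible_realmat[OF assms]] int_to_rvec_inj
    by (metis injD)
qed

section \<open>Positive definite matrices\<close>

lemma matrix_inv_mult:
  assumes "invertible A"
  shows "A ** matrix_inv A = mat 1" "matrix_inv A ** A = mat 1"
  using someI_ex[OF assms[unfolded invertible_def]] by (simp_all add: matrix_inv_def)

lemma matrix_inv_mult_vec:
  fixes A :: "real^'n^'n"
  assumes "invertible A"
  shows "A *v (matrix_inv A *v v) = v"
  by (metis assms matrix_inv_mult(1) matrix_vector_mul_assoc matrix_vector_mul_lid)

lemma matrix_inv_unique_vec:
  fixes A :: "real^'n^'n"
  assumes "invertible A" "A *v y = v"
  shows "matrix_inv A *v v = y"
  by (metis assms matrix_inv_mult(2) matrix_vector_mul_assoc matrix_vector_mul_lid)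

lemma inner_transpose_mult:
  fixes A :: "real^'n^'m"
  shows "x \<bullet> (transpose A *v y) = (A *v x) \<bullet> y"
  by (metis dot_lmul_matrix inner_commute transpose_matrix_vector)

lemma invertible_if_posdef:
  fixes A :: "real^'n^'n"
  assumes "\<forall>x. x \<noteq> 0 \<longrightarrow> x \<bullet> (A *v x) > 0"
  shows "invertible A"
proof -
  have "\<forall>x. A *v x = 0 \<longrightarrow> x = 0" using assms by force
  then show ?thesis using matrix_left_invertible_ker invertible_left_inverse by blast
qed

lemma posdef_matrix_inv:
  fixes A :: "real^'n^'n"
  assumes sym: "transpose A = A" and pos: "\<forall>x. x \<noteq> 0 \<longrightarrow> x \<bullet> (A *v x) > 0"
  shows "\<forall>x. x \<noteq> 0 \<longrightarrow> x \<bullet> (matrix_inv A *v x) > 0"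
proof (intro allI impI)
  fix x :: "real^'n" assume x: "x \<noteq> 0"
  define y where "y = matrix_inv A *v x"
  have Ay: "A *v y = x"
    unfolding y_def by (rule matrix_inv_mult_vec[OF invertible_if_posdef[OF pos]])
  then have "y \<noteq> 0" using x by auto
  then have "y \<bullet> (A *v y) > 0" using pos by blast
  moreover have "(A *v y) \<bullet> y = y \<bullet> (A *v y)"
    using inner_transpose_mult[of y A y] sym by simp
  ultimately show "x \<bullet> (matrix_inv A *v x) > 0"
    using Ay y_def by simp
qed

lemma posdef_coercive:
  fixes P :: "real^'n^'n"
  assumes "\<forall>x. x \<noteq> 0 \<longrightarrow> x \<bullet> (P *v x) > 0"
  obtains c where "c > 0" "\<And>x. x \<bullet> (P *v x) \<ge> c * (x \<bullet> x)"
proof -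
  have cont: "continuous_on (sphere 0 1) (\<lambda>x. x \<bullet> (P *v x))"
    by (intro continuous_intros linear_continuous_on matrix_vector_mul_bounded_linear)
  obtain u where u: "u \<in> sphere 0 1"
    and umin: "\<And>y. y \<in> sphere 0 1 \<Longrightarrow> u \<bullet> (P *v u) \<le> y \<bullet> (P *v y)"
    using continuous_attains_inf[OF compact_sphere _ cont] by auto
  have "u \<noteq> 0" using u by auto
  then have "u \<bullet> (P *v u) > 0" using assms by blast
  moreover have "x \<bullet> (P *v x) \<ge> (u \<bullet> (P *v u)) * (x \<bullet> x)" for x
  proof (cases "x = 0")
    case False
    define t where "t = norm x"
    have t: "t > 0" using False t_def by simp
    define y where "y = (1/t) *\<^sub>R x"
    have x: "x = t *\<^sub>R y" using t y_def by simp
    have "x \<bullet> (P *v x) = t^2 * (y \<bullet> (P *v y))"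
      by (simp add: x matrix_vector_mult_scaleR power2_eq_square)
    moreover have "x \<bullet> x = t^2" by (simp add: t_def power2_norm_eq_inner)
    moreover have "u \<bullet> (P *v u) \<le> y \<bullet> (P *v y)"
      by (rule umin) (use t t_def y_def in simp)
    ultimately show ?thesis using t by (simp add: mult_left_mono)
  qed simp
  ultimately show ?thesis using that by blast
qed

definition sym_posdef :: "int^'n^'n \<Rightarrow> bool" where
  "sym_posdef M \<longleftrightarrow> transpose M = M \<and> (\<forall>x. x \<noteq> 0 \<longrightarrow> x \<bullet> (realmat M *v x) > 0)"

lemma sym_posdef_if_symmetric_pd_even: "symmetric_pd_even L \<Longrightarrow> sym_posdef L"
  unfolding symmetric_pd_even_def sym_posdef_def by blast

lemma invertible_if_sym_posdef: "sym_posdef M \<Longrightarrow> invertible (realmat M)"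
  unfolding sym_posdef_def using invertible_if_posdef by blast

lemma sym_posdef_congruence:
  fixes L s :: "int^'n^'n"
  assumes "sym_posdef L" "det s \<noteq> 0"
  shows "sym_posdef (transpose s ** L ** s)"
  unfolding sym_posdef_def
proof (intro conjI allI impI)
  show "transpose (transpose s ** L ** s) = transpose s ** L ** s"
    using assms(1) by (simp add: sym_posdef_def matrix_transpose_mul matrix_mul_assoc)
next
  fix x :: "real^'n" assume "x \<noteq> 0"
  then have "realmat s *v x \<noteq> 0"
    by (metis inj_matrix_vector_mult[OF invertible_realmat[OF assms(2)]] injD
        matrix_vector_mult_0_right)
  then have "(realmat s *v x) \<bullet> (realmat L *v (realmat s *v x)) > 0"
    using assms(1) by (simp add: sym_posdef_def)
  moreover have "x \<bullet> (realmat (transpose s ** L ** s) *v x)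
      = (realmat s *v x) \<bullet> (realmat L *v (realmat s *v x))"
    unfolding realmat_mult realmat_transpose matrix_vector_mul_assoc[symmetric]
    by (rule inner_transpose_mult)
  ultimately show "x \<bullet> (realmat (transpose s ** L ** s) *v x) > 0" by simp
qed

lemma inv_qf_int_to_rvec: "inv_qf M r = int_to_rvec r \<bullet> (matrix_inv (realmat M) *v int_to_rvec r)"
  by (simp add: inv_qf_def int_to_rvec_def Let_def)

lemma inv_qf_congruence:
  fixes L s :: "int^'n^'n"
  assumes "sym_posdef L" "det s \<noteq> 0"
  shows "inv_qf (transpose s ** L ** s) (transpose s *v r) = inv_qf L r"
proof -
  let ?S = "realmat s" and ?A = "realmat L"
  define v where "v = int_to_rvec r"
  define y where "y = matrix_inv ?S *v (matrix_inv ?A *v v)"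
  have Sy: "?S *v y = matrix_inv ?A *v v"
    unfolding y_def by (rule matrix_inv_mult_vec[OF invertible_realmat[OF assms(2)]])
  have "realmat (transpose s ** L ** s) *v y = transpose ?S *v v"
    using matrix_inv_mult_vec[OF invertible_if_sym_posdef[OF assms(1)]]
    by (simp add: realmat_mult realmat_transpose matrix_vector_mul_assoc[symmetric] Sy)
  then have "matrix_inv (realmat (transpose s ** L ** s)) *v (transpose ?S *v v) = y"
    by (rule matrix_inv_unique_vec[OF invertible_if_sym_posdef[OF sym_posdef_congruence[OF assms]]])
  moreover have "int_to_rvec (transpose s *v r) = transpose ?S *v v"
    by (simp only: int_to_rvec_mult realmat_transpose v_def)
  ultimately have "inv_qf (transpose s ** L ** s) (transpose s *v r) = (transpose ?S *v v) \<bullet> y"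
    by (simp only: inv_qf_int_to_rvec)
  also have "\<dots> = v \<bullet> (?S *v y)"
    using inner_transpose_mult[of y ?S v] by (simp add: inner_commute)
  also have "\<dots> = inv_qf L r" unfolding Sy v_def inv_qf_int_to_rvec ..
  finally show ?thesis .
qed

section \<open>Absolute convergence of theta series\<close>

lemma summable_on_exp_neg_abs_int: "(\<lambda>k::int. exp (- real_of_int \<bar>k\<bar>)) summable_on UNIV"
proof -
  have geom: "(\<lambda>n::nat. exp (- real n)) summable_on UNIV"
  proof -
    have "summable (\<lambda>n::nat. exp (-1::real) ^ n)" by (rule summable_geometric) simp
    then show ?thesis
      by (subst summable_on_UNIV_nonneg_real_iff) (simp_all add: exp_of_nat_mult[symmetric])
  qed
  have "(\<lambda>k::int. exp (- real_of_int \<bar>k\<bar>)) summable_on range int"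
    using geom by (subst summable_on_reindex) (simp_all add: o_def)
  moreover have "(\<lambda>k::int. exp (- real_of_int \<bar>k\<bar>)) summable_on range (\<lambda>n. - int n)"
    using geom by (subst summable_on_reindex) (simp_all add: o_def inj_def)
  moreover have "range int \<union> range (\<lambda>n. - int n) = (UNIV :: int set)"
    by (auto intro: int_cases2)
  ultimately show ?thesis using summable_on_union by metis
qed

lemma summable_on_prod_coordinates:
  fixes g :: "int \<Rightarrow> real"
  assumes "g summable_on UNIV" "\<And>k. g k \<ge> 0"
  shows "(\<lambda>r::int^'n. \<Prod>i\<in>UNIV. g (r$i)) summable_on UNIV"
proof -
  have "Infinite_Set_Sum.abs_summable_on g UNIV"
    using assms abs_summable_equivalent[of g UNIV] by simp
  then have "Infinite_Set_Sum.abs_summable_on (\<lambda>p. \<Prod>i\<in>UNIV. g (p i)) (PiE (UNIV::'n set) (\<lambda>_. UNIV))"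
    by (intro abs_summable_on_prod_PiE) auto
  then have "(\<lambda>p. \<Prod>i\<in>UNIV. g (p i)) summable_on (UNIV :: ('n \<Rightarrow> int) set)"
    by (simp add: abs_summable_equivalent[symmetric] prod_nonneg assms(2))
  moreover have "bij_betw vec_lambda (UNIV :: ('n \<Rightarrow> int) set) UNIV"
    by (auto simp: bij_betw_def inj_def vec_eq_iff intro: range_eqI[of _ vec_lambda "vec_nth _"])
  ultimately show ?thesis
    using summable_on_reindex_bij_betw[of vec_lambda UNIV UNIV "\<lambda>r::int^'n. \<Prod>i\<in>UNIV. g (r$i)"]
    by simp
qed

lemma norm_ee: "norm (ee w) = exp (- 2 * pi * Im w)"
  by (simp add: ee_def)

lemma ee_add: "ee (a + b) = ee a * ee b"
  by (simp add: ee_def distrib_left exp_add)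

lemma ee_nonzero: "ee a \<noteq> 0"
  by (simp add: ee_def)

definition theta_term :: "int^'n^'n \<Rightarrow> complex \<Rightarrow> int^'n \<Rightarrow> complex^'n \<Rightarrow> complex" where
  "theta_term M \<tau> r z = ee (\<tau> * of_real (inv_qf M r) / 2 + (\<Sum>i\<in>UNIV. of_int (r$i) * z$i))"

lemma quadratic_le_linear_bound:
  fixes a b t :: real
  assumes "a > 0"
  shows "- a * t^2 + b * \<bar>t\<bar> \<le> (b + 1)^2 / (4 * a) - \<bar>t\<bar>"
proof -
  have "0 \<le> (2 * a * \<bar>t\<bar> - (b + 1))^2" by simp
  also have "\<dots> = 4 * a * (a * t^2 - (b + 1) * \<bar>t\<bar>) + (b + 1)^2"
    by (simp add: power2_eq_square algebra_simps)
  finally show ?thesis using assms by (simp add: field_simps)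
qed

lemma norm_theta_term_le:
  fixes M :: "int^'n^'n"
  assumes "sym_posdef M" "Im \<tau> > 0"
  obtains K where "\<And>r. norm (theta_term M \<tau> r z) \<le> (\<Prod>i\<in>UNIV. exp (K - real_of_int \<bar>r$i\<bar>))"
proof -
  obtain c where c: "c > 0" "\<And>x. x \<bullet> (matrix_inv (realmat M) *v x) \<ge> c * (x \<bullet> x)"
    using posdef_coercive posdef_matrix_inv assms(1) unfolding sym_posdef_def
    by (metis realmat_transpose)
  define a where "a = pi * Im \<tau> * c"
  define b where "b = 2 * pi * (\<Sum>j\<in>UNIV. \<bar>Im (z$j)\<bar>)"
  define K where "K = (b + 1)^2 / (4 * a)"
  have a: "a > 0" using c assms(2) by (simp add: a_def)
  have "norm (theta_term M \<tau> r z) \<le> (\<Prod>i\<in>UNIV. exp (K - real_of_int \<bar>r$i\<bar>))" for r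
  proof -
    define q where "q = inv_qf M r"
    have "pi * Im \<tau> * (c * (\<Sum>i\<in>UNIV. (real_of_int (r$i))^2)) \<le> pi * Im \<tau> * q"
      using c(2)[of "int_to_rvec r"] assms(2) unfolding q_def inv_qf_int_to_rvec
      by (intro mult_left_mono) (simp_all add: inner_vec_def int_to_rvec_def power2_eq_square)
    then have quad: "- pi * Im \<tau> * q \<le> (\<Sum>i\<in>UNIV. - a * (real_of_int (r$i))^2)"
      by (simp add: a_def sum_distrib_left sum_negf algebra_simps)
    have "- (2 * pi) * (real_of_int (r$i) * Im (z$i)) \<le> b * \<bar>real_of_int (r$i)\<bar>" for i
    proof -
      have "\<bar>Im (z$i)\<bar> \<le> (\<Sum>j\<in>UNIV. \<bar>Im (z$j)\<bar>)" by (rule member_le_sum) auto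
      then have "\<bar>real_of_int (r$i) * Im (z$i)\<bar> \<le> \<bar>real_of_int (r$i)\<bar> * (\<Sum>j\<in>UNIV. \<bar>Im (z$j)\<bar>)"
        by (simp add: abs_mult mult_left_mono)
      then have "- (real_of_int (r$i) * Im (z$i)) \<le> \<bar>real_of_int (r$i)\<bar> * (\<Sum>j\<in>UNIV. \<bar>Im (z$j)\<bar>)"
        using abs_ge_minus_self[of "real_of_int (r$i) * Im (z$i)"] by linarith
      then have "(2 * pi) * - (real_of_int (r$i) * Im (z$i))
          \<le> (2 * pi) * (\<bar>real_of_int (r$i)\<bar> * (\<Sum>j\<in>UNIV. \<bar>Im (z$j)\<bar>))"
        by (rule mult_left_mono) simp
      then show ?thesis unfolding b_def by (simp add: algebra_simps)
    qed
    then have lin: "- (2 * pi) * (\<Sum>i\<in>UNIV. real_of_int (r$i) * Im (z$i))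
        \<le> (\<Sum>i\<in>UNIV. b * \<bar>real_of_int (r$i)\<bar>)"
      unfolding sum_distrib_left by (rule sum_mono)
    have "- 2 * pi * Im (\<tau> * of_real q / 2 + (\<Sum>i\<in>UNIV. of_int (r$i) * z$i))
        = - pi * Im \<tau> * q - (2 * pi) * (\<Sum>i\<in>UNIV. real_of_int (r$i) * Im (z$i))"
      by (simp add: algebra_simps)
    also have "\<dots> \<le> (\<Sum>i\<in>UNIV. - a * (real_of_int (r$i))^2 + b * \<bar>real_of_int (r$i)\<bar>)"
      using quad lin unfolding sum.distrib by linarith
    also have "\<dots> \<le> (\<Sum>i\<in>UNIV. K - \<bar>real_of_int (r$i)\<bar>)"
      by (rule sum_mono) (use quadratic_le_linear_bound[OF a] in \<open>simp add: K_def\<close>)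
    finally show ?thesis
      by (simp add: theta_term_def norm_ee q_def[symmetric] exp_sum[symmetric])
  qed
  then show ?thesis using that by blast
qed

lemma theta_term_abs_summable:
  fixes M :: "int^'n^'n"
  assumes "sym_posdef M" "Im \<tau> > 0"
  shows "(\<lambda>r. norm (theta_term M \<tau> r z)) summable_on UNIV"
proof -
  obtain K where K: "\<And>r. norm (theta_term M \<tau> r z) \<le> (\<Prod>i\<in>UNIV. exp (K - real_of_int \<bar>r$i\<bar>))"
    using norm_theta_term_le[OF assms] by blast
  have "(\<lambda>k::int. exp K * exp (- real_of_int \<bar>k\<bar>)) summable_on UNIV"
    by (rule summable_on_cmult_right[OF summable_on_exp_neg_abs_int])
  then have "(\<lambda>r::int^'n. \<Prod>i\<in>UNIV. exp (K - real_of_int \<bar>r$i\<bar>)) summable_on UNIV"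
    by (intro summable_on_prod_coordinates) (simp_all add: exp_diff exp_minus field_simps)
  then show ?thesis
    by (rule summable_on_comparison_test[OF _ K]) simp
qed

lemma bounded_coeff_theta_summable:
  fixes M :: "int^'n^'n"
  assumes "sym_posdef M" "Im \<tau> > 0" "\<And>r. norm (c r) \<le> B"
  shows "(\<lambda>r. c r * theta_term M \<tau> r z) summable_on A"
proof -
  have "(\<lambda>r. norm (c r * theta_term M \<tau> r z)) summable_on UNIV"
  proof (rule Infinite_Sum.abs_summable_on_comparison_test)
    show "(\<lambda>r. norm (of_real B * theta_term M \<tau> r z)) summable_on UNIV"
      using theta_term_abs_summable[OF assms(1,2)] by (simp add: norm_mult summable_on_cmult_right)
    show "norm (c r * theta_term M \<tau> r z) \<le> norm (of_real B * theta_term M \<tau> r z)" for r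
      using assms(3)[of r] norm_ge_zero[of "c r"]
      by (simp add: norm_mult mult_right_mono)
  qed
  then show ?thesis
    using summable_on_iff_abs_summable_on_complex summable_on_subset_banach by blast
qed

section \<open>The discriminant group\<close>

lemma lat_coset_shift: "lat_coset M (a + M *v x) = lat_coset M a"
proof -
  have "a + M *v x + M *v y = a + M *v (x + y)" for y
    by (simp add: matrix_vector_right_distrib add.assoc)
  moreover have "a + M *v y = a + M *v x + M *v (y - x)" for y
    by (simp add: matrix_vector_mult_diff_distrib)
  ultimately show ?thesis unfolding lat_coset_def by blast
qed

lemma lat_coset_self: "a \<in> lat_coset M a"
  unfolding lat_coset_def by (rule CollectI, rule exI[of _ 0]) simp

lemma lat_coset_eq_if_mem:
  assumes "b \<in> lat_coset M a"
  shows "lat_coset M b = lat_coset M a"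
proof -
  obtain x where "b = a + M *v x" using assms unfolding lat_coset_def by blast
  then show ?thesis by (simp add: lat_coset_shift)
qed

lemma disc_eq_lat_coset: "C \<in> disc M \<Longrightarrow> r \<in> C \<Longrightarrow> lat_coset M r = C"
  unfolding disc_def using lat_coset_eq_if_mem by blast

lemma finite_int_vec_box: "finite {r :: int^'n. \<forall>i. \<bar>r$i\<bar> \<le> K}"
proof (rule finite_subset)
  show "{r :: int^'n. \<forall>i. \<bar>r$i\<bar> \<le> K} \<subseteq> vec_lambda ` PiE UNIV (\<lambda>_. {-K..K})"
  proof
    fix r :: "int^'n" assume "r \<in> {r. \<forall>i. \<bar>r$i\<bar> \<le> K}"
    then have "vec_nth r \<in> PiE UNIV (\<lambda>_. {-K..K})" by (auto simp: abs_le_iff minus_le_iff)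
    then show "r \<in> vec_lambda ` PiE UNIV (\<lambda>_. {-K..K})" by (metis image_eqI vec_nth_inverse)
  qed
qed (intro finite_imageI finite_PiE; simp)

text \<open>Reduce \<open>r\<close> by \<open>M \<lfloor>M\<^sup>-\<^sup>1 r\<rfloor>\<close>, leaving \<open>M\<close> applied to a vector with entries in \<open>[0, 1)\<close>.\<close>

lemma lat_coset_bounded_representative:
  fixes M :: "int^'n^'n"
  assumes "invertible (realmat M)"
  obtains r' where "lat_coset M r' = lat_coset M r" "\<And>i. \<bar>r'$i\<bar> \<le> (\<Sum>j\<in>UNIV. \<bar>M$i$j\<bar>)"
proof
  define y where "y = matrix_inv (realmat M) *v int_to_rvec r"
  define x :: "int^'n" where "x = (\<chi> i. \<lfloor>y$i\<rfloor>)"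
  define r' where "r' = r - M *v x"
  show "lat_coset M r' = lat_coset M r"
    using lat_coset_shift[of M r' x] by (simp add: r'_def)
  fix i
  have "int_to_rvec r' = realmat M *v (y - int_to_rvec x)"
    unfolding r'_def int_to_rvec_diff int_to_rvec_mult matrix_vector_mult_diff_distrib y_def
      matrix_inv_mult_vec[OF assms] ..
  then have "real_of_int (r'$i) = (\<Sum>j\<in>UNIV. real_of_int (M$i$j) * (y$j - real_of_int \<lfloor>y$j\<rfloor>))"
    by (simp add: vec_eq_iff int_to_rvec_def matrix_vector_mult_def realmat_def x_def)
  also have "\<bar>\<dots>\<bar> \<le> (\<Sum>j\<in>UNIV. \<bar>real_of_int (M$i$j) * (y$j - real_of_int \<lfloor>y$j\<rfloor>)\<bar>)"
    by (rule sum_abs)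
  also have "\<dots> \<le> (\<Sum>j\<in>UNIV. \<bar>real_of_int (M$i$j)\<bar>)"
  proof (rule sum_mono)
    fix j
    have "0 \<le> y$j - real_of_int \<lfloor>y$j\<rfloor>" "y$j - real_of_int \<lfloor>y$j\<rfloor> < 1"
      by linarith+
    then show "\<bar>real_of_int (M$i$j) * (y$j - real_of_int \<lfloor>y$j\<rfloor>)\<bar> \<le> \<bar>real_of_int (M$i$j)\<bar>"
      by (simp add: abs_mult mult_left_le)
  qed
  finally show "\<bar>r'$i\<bar> \<le> (\<Sum>j\<in>UNIV. \<bar>M$i$j\<bar>)"
    by (simp flip: of_int_abs of_int_sum)
qed

lemma finite_disc:
  fixes M :: "int^'n^'n"
  assumes "sym_posdef M"
  shows "finite (disc M)"
proof -
  define K where "K = (\<Sum>i\<in>UNIV. \<Sum>j\<in>UNIV. \<bar>M$i$j\<bar>)"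
  have "disc M \<subseteq> lat_coset M ` {r. \<forall>i. \<bar>r$i\<bar> \<le> K}"
  proof
    fix C assume "C \<in> disc M"
    then obtain r where "C = lat_coset M r" unfolding disc_def by blast
    moreover obtain r' where "lat_coset M r' = lat_coset M r"
      and "\<And>i. \<bar>r'$i\<bar> \<le> (\<Sum>j\<in>UNIV. \<bar>M$i$j\<bar>)"
      using lat_coset_bounded_representative[OF invertible_if_sym_posdef[OF assms]] by blast
    moreover have "(\<Sum>j\<in>UNIV. \<bar>M$i$j\<bar>) \<le> K" for i
      unfolding K_def by (rule member_le_sum) (auto simp: sum_nonneg)
    ultimately have "C = lat_coset M r'" "\<forall>i. \<bar>r'$i\<bar> \<le> K"
      using order_trans by metis+
    then show "C \<in> lat_coset M ` {r. \<forall>i. \<bar>r$i\<bar> \<le> K}" by blast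
  qed
  then show ?thesis using finite_int_vec_box finite_subset by blast
qed

lemma norm_class_function_le:
  fixes M :: "int^'n^'n"
  assumes "sym_posdef M"
  shows "norm (c (lat_coset M r)) \<le> (\<Sum>C\<in>disc M. norm (c C))"
  by (rule member_le_sum[OF _ _ finite_disc[OF assms]]) (auto simp: disc_def)

lemma sum_theta_eq_infsum:
  fixes M :: "int^'n^'n" and c :: "(int^'n) set \<Rightarrow> complex"
  assumes "sym_posdef M" "Im \<tau> > 0"
  shows "(\<Sum>C\<in>disc M. theta M C \<tau> z * c C) = (\<Sum>\<^sub>\<infinity>r. c (lat_coset M r) * theta_term M \<tau> r z)"
proof -
  let ?F = "\<lambda>r. c (lat_coset M r) * theta_term M \<tau> r z"
  have "theta M C \<tau> z * c C = infsum ?F C" if "C \<in> disc M" for C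
  proof -
    have "theta M C \<tau> z * c C = (\<Sum>\<^sub>\<infinity>r\<in>C. theta_term M \<tau> r z * c C)"
      unfolding theta_def theta_term_def by (rule infsum_cmult_left'[symmetric])
    also have "\<dots> = infsum ?F C"
      by (rule infsum_cong) (use disc_eq_lat_coset[OF that] in auto)
    finally show ?thesis .
  qed
  then have "(\<Sum>C\<in>disc M. theta M C \<tau> z * c C) = (\<Sum>C\<in>disc M. infsum ?F C)"
    by simp
  also have "\<dots> = infsum ?F (\<Union>C\<in>disc M. C)"
  proof (rule sum_infsum[OF finite_disc[OF assms(1)]])
    show "?F summable_on C" for C
      by (rule bounded_coeff_theta_summable[OF assms norm_class_function_le[OF assms(1)]])
    show "C \<inter> C' = {}" if "C \<in> disc M" "C' \<in> disc M" "C \<noteq> C'" for C C'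
      using that disc_eq_lat_coset by blast
  qed
  also have "(\<Union>C\<in>disc M. C) = UNIV"
    using lat_coset_self by (auto simp: disc_def)
  finally show ?thesis .
qed

section \<open>Uniqueness of Fourier coefficients\<close>

lemma ee_sum: "finite A \<Longrightarrow> ee (\<Sum>i\<in>A. f i) = (\<Prod>i\<in>A. ee (f i))"
  by (induction A rule: finite_induct) (simp add: ee_def, simp add: ee_add)

lemma ee_of_int: "ee (of_int n) = 1"
proof -
  have "ee (of_int n) = exp ((2 * of_int n * pi) * \<i>)" by (simp add: ee_def algebra_simps)
  also have "\<dots> = 1" by (rule exp_integer_2pi) simp
  finally show ?thesis .
qed

lemma dvd_if_ee_eq_1:
  fixes k :: int and M :: nat
  assumes "M > 0" "ee (of_int k / of_nat M) = 1"
  shows "int M dvd k"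
proof -
  have "exp (\<i> * of_real (2 * pi * (real_of_int k / real M))) = 1"
    using assms(2) by (simp add: ee_def algebra_simps)
  then obtain n :: int where "2 * pi * (real_of_int k / real M) = of_int (2 * n) * pi"
    by (auto simp: exp_eq_1)
  then have "real_of_int k = real_of_int n * real M" using assms(1) by (simp add: field_simps)
  then have "k = n * int M" by (metis of_int_eq_iff of_int_mult of_int_of_nat_eq)
  then show ?thesis by simp
qed

lemma sum_ee_multiples:
  fixes k :: int and M :: nat
  assumes "M > 0"
  shows "(\<Sum>j\<in>{0..<int M}. ee (of_int (k * j) / of_nat M)) = (if int M dvd k then of_nat M else 0)"
proof -
  let ?w = "ee (of_int k / of_nat M)"
  have pow: "ee (of_int (k * int j) / of_nat M) = ?w ^ j" for j :: nat
    unfolding ee_def exp_of_nat_mult[symmetric] by (simp add: algebra_simps)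
  have "int ` {..<M} = {0..<int M}"
    by (auto simp: image_iff) (metis nat_less_iff int_nat_eq nonneg_int_cases lessThan_iff of_nat_less_iff)
  then have "(\<Sum>j\<in>{0..<int M}. ee (of_int (k * j) / of_nat M)) = (\<Sum>j<M. ?w ^ j)"
    by (metis (no_types, lifting) inj_on_of_nat pow sum.reindex_cong)
  also have "\<dots> = (if ?w = 1 then of_nat M else (1 - ?w ^ M) / (1 - ?w))"
    by (rule sum_gp_strict)
  also have "\<dots> = (if int M dvd k then of_nat M else 0)"
  proof (cases "int M dvd k")
    case True
    then obtain n where "of_int k / of_nat M = (of_int n :: complex)"
      using assms by (auto elim!: dvdE)
    then show ?thesis using True ee_of_int by simp
  next
    case False
    have "?w ^ M = ee (of_int k)" using pow[of M] assms by simp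
    moreover have "?w \<noteq> 1" using False dvd_if_ee_eq_1[OF assms] by blast
    ultimately show ?thesis using False ee_of_int by simp
  qed
  finally show ?thesis .
qed

definition residue_box :: "nat \<Rightarrow> (int^'n) set" where
  "residue_box M = vec_lambda ` PiE UNIV (\<lambda>_. {0..<int M})"

lemma finite_residue_box: "finite (residue_box M)"
  unfolding residue_box_def by (intro finite_imageI finite_PiE) auto

lemma sum_ee_residue_box:
  fixes k :: "int^'n" and M :: nat
  assumes "M > 0"
  shows "(\<Sum>w\<in>residue_box M. ee (\<Sum>i\<in>UNIV. of_int (k$i * w$i) / of_nat M)) =
         (if \<forall>i. int M dvd k$i then of_nat M ^ CARD('n) else 0)"
proof -
  have inj: "inj_on vec_lambda (PiE (UNIV::'n set) (\<lambda>_. {0..<int M}))"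
    by (auto simp: inj_on_def)
  have "(\<Sum>w\<in>residue_box M. ee (\<Sum>i\<in>UNIV. of_int (k$i * w$i) / of_nat M)) =
        (\<Sum>p\<in>PiE (UNIV::'n set) (\<lambda>_. {0..<int M}). \<Prod>i\<in>UNIV. ee (of_int (k$i * p i) / of_nat M))"
    unfolding residue_box_def by (simp add: sum.reindex[OF inj] ee_sum)
  also have "\<dots> = (\<Prod>i\<in>(UNIV::'n set). \<Sum>j\<in>{0..<int M}. ee (of_int (k$i * j) / of_nat M))"
    by (rule prod_sum_PiE[symmetric]) auto
  also have "\<dots> = (\<Prod>i\<in>(UNIV::'n set). if int M dvd k$i then of_nat M else 0)"
    using sum_ee_multiples[OF assms] by simp
  also have "\<dots> = (if \<forall>i. int M dvd k$i then of_nat M ^ CARD('n) else 0)"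
    by (auto simp: prod_zero)
  finally show ?thesis .
qed

lemma has_sum_sum:
  fixes f :: "'w \<Rightarrow> 'a \<Rightarrow> 'b::topological_comm_monoid_add"
  assumes "finite W" "\<And>w. w \<in> W \<Longrightarrow> (f w has_sum S w) A"
  shows "((\<lambda>r. \<Sum>w\<in>W. f w r) has_sum (\<Sum>w\<in>W. S w)) A"
  using assms by (induction W rule: finite_induct) (simp_all add: has_sum_add)

text \<open>Averaging the series over the points \<open>z = w/M\<close>, \<open>w \<in> residue_box M\<close>, kills every term
  except those with \<open>r \<equiv> \<nu> (mod M)\<close>.\<close>

lemma infsum_congruence_class_eq_0:
  fixes a :: "int^'n \<Rightarrow> complex"
  assumes summable: "(\<lambda>r. norm (a r)) summable_on UNIV"
    and zero: "\<And>z. (\<Sum>\<^sub>\<infinity>r. a r * ee (\<Sum>i\<in>UNIV. of_int (r$i) * z$i)) = 0"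
    and "M > 0"
  shows "(\<Sum>\<^sub>\<infinity>r\<in>{r. \<forall>i. int M dvd (r$i - \<nu>$i)}. a r) = 0"
proof -
  define R where "R = {r. \<forall>i. int M dvd (r$i - \<nu>$i)}"
  define g where "g w r = a r * ee (\<Sum>i\<in>UNIV. of_int ((r$i - \<nu>$i) * w$i) / of_nat M)" for w r
  have "(g w has_sum 0) UNIV" for w
  proof -
    define zw where "zw = (\<chi> i. (of_int (w$i) / of_nat M :: complex))"
    define c where "c = ee (- (\<Sum>i\<in>UNIV. of_int (\<nu>$i * w$i) / of_nat M))"
    have gw: "g w r = c * (a r * ee (\<Sum>i\<in>UNIV. of_int (r$i) * zw$i))" for r
    proof -
      have e: "(\<Sum>i\<in>UNIV. of_int ((r$i - \<nu>$i) * w$i) / of_nat M) =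
          - (\<Sum>i\<in>UNIV. of_int (\<nu>$i * w$i) / of_nat M) + (\<Sum>i\<in>UNIV. of_int (r$i) * zw$i :: complex)"
        by (simp add: zw_def sum_negf[symmetric] sum.distrib[symmetric] algebra_simps
            add_divide_distrib[symmetric] diff_divide_distrib)
      show ?thesis unfolding g_def c_def e ee_add by (simp only: mult.left_commute)
    qed
    have "(\<lambda>r. a r * ee (\<Sum>i\<in>UNIV. of_int (r$i) * zw$i)) summable_on UNIV"
      using summable by (subst summable_on_iff_abs_summable_on_complex) (simp add: norm_mult norm_ee zw_def)
    then have "((\<lambda>r. a r * ee (\<Sum>i\<in>UNIV. of_int (r$i) * zw$i)) has_sum 0) UNIV"
      using has_sum_infsum zero[of zw] by fastforce
    moreover have "g w = (\<lambda>r. c * (a r * ee (\<Sum>i\<in>UNIV. of_int (r$i) * zw$i)))"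
      by (intro ext gw)
    ultimately show ?thesis
      using has_sum_cmult_right by fastforce
  qed
  then have "((\<lambda>r. \<Sum>w\<in>residue_box M. g w r) has_sum 0) UNIV"
    using has_sum_sum[OF finite_residue_box, where f = g and S = "\<lambda>_. 0"] by simp
  moreover have "(\<Sum>w\<in>residue_box M. g w r) = a r * (if r \<in> R then of_nat M ^ CARD('n) else 0)" for r
    using sum_ee_residue_box[OF assms(3), of "r - \<nu>"]
    by (simp add: g_def R_def sum_distrib_left[symmetric])
  ultimately have "((\<lambda>r. a r * of_nat M ^ CARD('n)) has_sum 0) R"
    by (subst has_sum_cong_neutral[where T = UNIV and g = "\<lambda>r. \<Sum>w\<in>residue_box M. g w r"]) auto
  then show ?thesis
    using assms(3) has_sum_cmult_left_iff[where c = "of_nat M ^ CARD('n)" and f = a and A = R] R_def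
    by (simp add: infsumI del: of_nat_power)
qed

lemma fourier_coeff_unique:
  fixes a :: "int^'n \<Rightarrow> complex"
  assumes summable: "(\<lambda>r. norm (a r)) summable_on UNIV"
    and zero: "\<And>z. (\<Sum>\<^sub>\<infinity>r. a r * ee (\<Sum>i\<in>UNIV. of_int (r$i) * z$i)) = 0"
  shows "a \<nu> = 0"
proof -
  have summable_norm: "(\<lambda>r. norm (a r)) summable_on A" for A
    using summable_on_subset_banach[OF summable] by blast
  have summable_a: "a summable_on A" for A
    using summable_norm summable_on_iff_abs_summable_on_complex by blast
  have tail: "norm (a \<nu>) \<le> (\<Sum>\<^sub>\<infinity>r\<in>UNIV - F. norm (a r))" if "finite F" for F
  proof -
    define M where "M = Suc (nat (\<Sum>r\<in>F. \<Sum>i\<in>UNIV. \<bar>r$i - \<nu>$i\<bar>))"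
    define R where "R = {r. \<forall>i. int M dvd (r$i - \<nu>$i)}"
    have "r \<notin> F" if r: "r \<in> R - {\<nu>}" for r
    proof
      assume "r \<in> F"
      obtain i where i: "r$i \<noteq> \<nu>$i" using r by (auto simp: vec_eq_iff)
      have "\<bar>r$i - \<nu>$i\<bar> \<le> (\<Sum>i\<in>UNIV. \<bar>r$i - \<nu>$i\<bar>)" by (rule member_le_sum) auto
      also have "\<dots> \<le> (\<Sum>r\<in>F. \<Sum>i\<in>UNIV. \<bar>r$i - \<nu>$i\<bar>)"
        by (rule member_le_sum[OF \<open>r \<in> F\<close> _ \<open>finite F\<close>]) (simp add: sum_nonneg)
      finally have "\<bar>r$i - \<nu>$i\<bar> < int M" unfolding M_def by linarith
      moreover have "int M dvd (r$i - \<nu>$i)" using r R_def by auto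
      moreover have "\<bar>int M\<bar> \<le> \<bar>r$i - \<nu>$i\<bar>"
        using i \<open>int M dvd (r$i - \<nu>$i)\<close> by (intro dvd_imp_le_int) auto
      ultimately show False by simp
    qed
    then have sub: "R - {\<nu>} \<subseteq> UNIV - F" by blast
    have "a \<nu> + (\<Sum>\<^sub>\<infinity>r\<in>R - {\<nu>}. a r) = (\<Sum>\<^sub>\<infinity>r\<in>R. a r)"
      using infsum_Un_disjoint[OF summable_a summable_a, of "{\<nu>}" "R - {\<nu>}"]
      by (simp add: R_def insert_absorb)
    also have "\<dots> = 0"
      unfolding R_def by (rule infsum_congruence_class_eq_0[OF summable zero]) (simp add: M_def)
    finally have "norm (a \<nu>) = norm (\<Sum>\<^sub>\<infinity>r\<in>R - {\<nu>}. a r)"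
      by (simp add: add_eq_0_iff)
    also have "\<dots> \<le> (\<Sum>\<^sub>\<infinity>r\<in>R - {\<nu>}. norm (a r))"
      by (rule norm_infsum_bound) (rule summable_norm)
    also have "\<dots> \<le> (\<Sum>\<^sub>\<infinity>r\<in>UNIV - F. norm (a r))"
      by (rule infsum_mono2[OF summable_norm summable_norm sub]) simp
    finally show ?thesis .
  qed
  show ?thesis
  proof (rule ccontr)
    assume "a \<nu> \<noteq> 0"
    then obtain F where F: "finite F"
      "dist (\<Sum>r\<in>F. norm (a r)) (\<Sum>\<^sub>\<infinity>r. norm (a r)) \<le> norm (a \<nu>) / 2"
      using has_sum_finite_approximation[OF has_sum_infsum[OF summable], of "norm (a \<nu>) / 2"]
      by auto
    have "(\<Sum>\<^sub>\<infinity>r. norm (a r)) = (\<Sum>r\<in>F. norm (a r)) + (\<Sum>\<^sub>\<infinity>r\<in>UNIV - F. norm (a r))"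
      using infsum_Un_disjoint[OF summable_norm summable_norm, of F "UNIV - F"] F(1)
      by (simp add: Un_Diff_cancel)
    then have "dist (\<Sum>r\<in>F. norm (a r)) (\<Sum>\<^sub>\<infinity>r. norm (a r)) = \<bar>\<Sum>\<^sub>\<infinity>r\<in>UNIV - F. norm (a r)\<bar>"
      by (simp add: dist_real_def)
    moreover have "norm (a \<nu>) > 0" using \<open>a \<nu> \<noteq> 0\<close> by simp
    ultimately show False
      using tail[OF F(1)] F(2) by linarith
  qed
qed

section \<open>Comparing theta expansions\<close>

lemma theta_series_coeff_unique:
  fixes M :: "int^'n^'n"
  assumes posdef: "sym_posdef M" and "Im \<tau> > 0"
    and bounded: "\<And>r. norm (c r) \<le> B" "\<And>r. norm (d r) \<le> B"
    and eq: "\<And>z. (\<Sum>\<^sub>\<infinity>r. c r * theta_term M \<tau> r z) = (\<Sum>\<^sub>\<infinity>r. d r * theta_term M \<tau> r z)"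
  shows "c = d"
proof
  fix \<rho>
  define a where "a r = (c r - d r) * theta_term M \<tau> r 0" for r
  have bounded_diff: "norm (c r - d r) \<le> B + B" for r
    using norm_triangle_ineq4[of "c r" "d r"] bounded[of r] by linarith
  have "a summable_on UNIV"
    unfolding a_def by (rule bounded_coeff_theta_summable[OF posdef \<open>Im \<tau> > 0\<close> bounded_diff])
  then have summable: "(\<lambda>r. norm (a r)) summable_on UNIV"
    by (simp add: summable_on_iff_abs_summable_on_complex)
  have "(\<Sum>\<^sub>\<infinity>r. a r * ee (\<Sum>i\<in>UNIV. of_int (r$i) * z$i)) = 0" for z
  proof -
    have split: "a r * ee (\<Sum>i\<in>UNIV. of_int (r$i) * z$i)
        = c r * theta_term M \<tau> r z + - (d r * theta_term M \<tau> r z)" for r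
      by (simp add: a_def theta_term_def ee_add algebra_simps)
    have summable_c: "(\<lambda>r. c r * theta_term M \<tau> r z) summable_on UNIV"
      and summable_d: "(\<lambda>r. d r * theta_term M \<tau> r z) summable_on UNIV"
      using bounded by (auto intro: bounded_coeff_theta_summable[OF posdef \<open>Im \<tau> > 0\<close>])
    have "((\<lambda>r. c r * theta_term M \<tau> r z) has_sum (\<Sum>\<^sub>\<infinity>r. c r * theta_term M \<tau> r z)) UNIV"
      using summable_c by (rule has_sum_infsum)
    moreover have "((\<lambda>r. d r * theta_term M \<tau> r z) has_sum (\<Sum>\<^sub>\<infinity>r. c r * theta_term M \<tau> r z)) UNIV"
      using has_sum_infsum[OF summable_d] eq[of z] by simp
    ultimately have "((\<lambda>r. a r * ee (\<Sum>i\<in>UNIV. of_int (r$i) * z$i)) has_sum 0) UNIV"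
      unfolding split using has_sum_add has_sum_uminusI by fastforce
    then show ?thesis by (rule infsumI)
  qed
  then have "a \<rho> = 0" by (rule fourier_coeff_unique[OF summable])
  then show "c \<rho> = d \<rho>" by (simp add: a_def theta_term_def ee_nonzero)
qed

lemma sum_mult_cmv:
  "(\<Sum>i\<in>UNIV. of_int (r$i) * cmv s z $ i) = (\<Sum>i\<in>UNIV. of_int ((transpose s *v r)$i) * z$i)"
proof -
  have "(\<Sum>i\<in>UNIV. of_int (r$i) * cmv s z $ i) = (\<Sum>i\<in>UNIV. \<Sum>j\<in>UNIV. of_int (r$i) * of_int (s$i$j) * z$j)"
    by (simp add: cmv_def sum_distrib_left mult.assoc)
  also have "\<dots> = (\<Sum>j\<in>UNIV. \<Sum>i\<in>UNIV. of_int (r$i) * of_int (s$i$j) * z$j)"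
    by (rule sum.swap)
  also have "\<dots> = (\<Sum>j\<in>UNIV. of_int ((transpose s *v r)$j) * z$j)"
    by (simp add: matrix_vector_mult_def transpose_def of_int_sum sum_distrib_right sum_distrib_left
        mult_ac)
  finally show ?thesis .
qed

lemma theta_term_cmv:
  fixes L s :: "int^'n^'n"
  assumes "sym_posdef L" "det s \<noteq> 0"
  shows "theta_term L \<tau> r (cmv s z) = theta_term (transpose s ** L ** s) \<tau> (transpose s *v r) z"
  unfolding theta_term_def sum_mult_cmv inv_qf_congruence[OF assms] ..

lemma infsum_theta_term_cmv:
  fixes L s :: "int^'n^'n"
  assumes "sym_posdef L" "det s \<noteq> 0"
  defines "T \<equiv> (*v) (transpose s)"
  shows "(\<Sum>\<^sub>\<infinity>r. f r * theta_term L \<tau> r (cmv s z))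
       = (\<Sum>\<^sub>\<infinity>\<rho>. (if \<rho> \<in> range T then f (inv T \<rho>) else 0)
                   * theta_term (transpose s ** L ** s) \<tau> \<rho> z)"
proof -
  have inj: "inj T"
    unfolding T_def using inj_matrix_vector_mult_int[of "transpose s"] assms(2) by simp
  have "(\<Sum>\<^sub>\<infinity>\<rho>. (if \<rho> \<in> range T then f (inv T \<rho>) else 0) * theta_term (transpose s ** L ** s) \<tau> \<rho> z)
      = (\<Sum>\<^sub>\<infinity>\<rho>\<in>range T. f (inv T \<rho>) * theta_term (transpose s ** L ** s) \<tau> \<rho> z)"
    by (rule infsum_cong_neutral) auto
  also have "\<dots> = infsum ((\<lambda>\<rho>. f (inv T \<rho>) * theta_term (transpose s ** L ** s) \<tau> \<rho> z) \<circ> T) UNIV"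
    using inj by (simp add: infsum_reindex)
  also have "\<dots> = (\<Sum>\<^sub>\<infinity>r. f r * theta_term L \<tau> r (cmv s z))"
    by (simp add: o_def inv_f_f[OF inj] theta_term_cmv[OF assms(1,2), folded T_def])
  finally show ?thesis ..
qed

lemma theta_decomp_U_op:
  fixes L s :: "int^'n^'n"
  assumes posdef: "sym_posdef L" and "det s \<noteq> 0"
    and decomp: "theta_decomp L \<phi> h" and decomp': "theta_decomp (transpose s ** L ** s) (U_op s \<phi>) h'"
    and "Im \<tau> > 0"
  defines "T \<equiv> (*v) (transpose s)"
  shows "h' (lat_coset (transpose s ** L ** s) \<rho>) \<tau>
       = (if \<rho> \<in> range T then h (lat_coset L (inv T \<rho>)) \<tau> else 0)"
proof -
  let ?L' = "transpose s ** L ** s"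
  have posdef': "sym_posdef ?L'" by (rule sym_posdef_congruence[OF assms(1,2)])
  define B where "B = (\<Sum>C\<in>disc ?L'. norm (h' C \<tau>)) + (\<Sum>C\<in>disc L. norm (h C \<tau>))"
  have "(\<lambda>\<rho>. h' (lat_coset ?L' \<rho>) \<tau>) = (\<lambda>\<rho>. if \<rho> \<in> range T then h (lat_coset L (inv T \<rho>)) \<tau> else 0)"
  proof (rule theta_series_coeff_unique[OF posdef' \<open>Im \<tau> > 0\<close>])
    have "(\<Sum>C\<in>disc ?L'. norm (h' C \<tau>)) \<ge> 0" "(\<Sum>C\<in>disc L. norm (h C \<tau>)) \<ge> 0"
      by (simp_all add: sum_nonneg)
    then show "norm (h' (lat_coset ?L' \<rho>) \<tau>) \<le> B"
      and "norm (if \<rho> \<in> range T then h (lat_coset L (inv T \<rho>)) \<tau> else 0) \<le> B" for \<rho>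
      using norm_class_function_le[OF posdef', of "\<lambda>C. h' C \<tau>" \<rho>]
        norm_class_function_le[OF posdef, of "\<lambda>C. h C \<tau>" "inv T \<rho>"]
      unfolding B_def by auto
    fix z
    have "(\<Sum>\<^sub>\<infinity>\<rho>. h' (lat_coset ?L' \<rho>) \<tau> * theta_term ?L' \<tau> \<rho> z) = U_op s \<phi> \<tau> z"
      using decomp' \<open>Im \<tau> > 0\<close> sum_theta_eq_infsum[OF posdef' \<open>Im \<tau> > 0\<close>, of z "\<lambda>C. h' C \<tau>"]
      by (simp add: theta_decomp_def)
    also have "\<dots> = (\<Sum>\<^sub>\<infinity>r. h (lat_coset L r) \<tau> * theta_term L \<tau> r (cmv s z))"
      using decomp \<open>Im \<tau> > 0\<close> sum_theta_eq_infsum[OF posdef \<open>Im \<tau> > 0\<close>, of "cmv s z" "\<lambda>C. h C \<tau>"]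
      by (simp add: theta_decomp_def U_op_def)
    finally show "(\<Sum>\<^sub>\<infinity>\<rho>. h' (lat_coset ?L' \<rho>) \<tau> * theta_term ?L' \<tau> \<rho> z)
        = (\<Sum>\<^sub>\<infinity>\<rho>. (if \<rho> \<in> range T then h (lat_coset L (inv T \<rho>)) \<tau> else 0) * theta_term ?L' \<tau> \<rho> z)"
      unfolding T_def infsum_theta_term_cmv[OF posdef \<open>det s \<noteq> 0\<close>] .
  qed
  then show ?thesis by metis
qed

theorem proposition5p1:
  fixes L s :: "int^'n^'n" and k :: int
    and \<phi> :: "complex \<Rightarrow> complex^'n \<Rightarrow> complex"
    and h h' :: "(int^'n) set \<Rightarrow> complex \<Rightarrow> complex"
  assumes "symmetric_pd_even L"
    and "det s \<noteq> 0"
    and "jacobi_form k L \<phi>"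
    and "theta_decomp L \<phi> h"
    and "theta_decomp (transpose s ** L ** s) (U_op s \<phi>) h'"
  shows "(\<forall>\<nu> \<mu> :: int^'n. \<forall>\<tau>. Im \<tau> > 0 \<longrightarrow>
            \<nu> - transpose s *v \<mu> \<in> range (\<lambda>x. transpose s *v (L *v x)) \<longrightarrow>
            h' (lat_coset (transpose s ** L ** s) \<nu>) \<tau> = h (lat_coset L \<mu>) \<tau>) \<and>
         (\<forall>\<nu> :: int^'n. \<forall>\<tau>. Im \<tau> > 0 \<longrightarrow>
            \<nu> \<notin> range (\<lambda>x. transpose s *v x) \<longrightarrow>
            h' (lat_coset (transpose s ** L ** s) \<nu>) \<tau> = 0)"
proof -
  have inj: "inj ((*v) (transpose s))"
    using inj_matrix_vector_mult_int[of "transpose s"] assms(2) by simp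
  note coeffs = theta_decomp_U_op[OF sym_posdef_if_symmetric_pd_even[OF assms(1)] assms(2,4,5)]
  show ?thesis
  proof (intro conjI allI impI)
    fix \<nu> \<mu> :: "int^'n" and \<tau> :: complex
    assume "Im \<tau> > 0" and "\<nu> - transpose s *v \<mu> \<in> range (\<lambda>x. transpose s *v (L *v x))"
    then obtain x where "\<nu> = transpose s *v (\<mu> + L *v x)"
      by (auto simp: matrix_vector_right_distrib algebra_simps)
    then show "h' (lat_coset (transpose s ** L ** s) \<nu>) \<tau> = h (lat_coset L \<mu>) \<tau>"
      using coeffs[OF \<open>Im \<tau> > 0\<close>, of \<nu>]
      by (simp add: inv_f_f[OF inj] lat_coset_shift del: transpose_matrix_vector)
  next
    fix \<nu> :: "int^'n" and \<tau> :: complex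
    assume "Im \<tau> > 0" and "\<nu> \<notin> range (\<lambda>x. transpose s *v x)"
    then show "h' (lat_coset (transpose s ** L ** s) \<nu>) \<tau> = 0"
      using coeffs[OF \<open>Im \<tau> > 0\<close>, of \<nu>] by simp
  qed
qed

end
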